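(* Let $b,h,d\ge1$ be integers, let $D'$ be a digraph and $v\in V(D')$. Suppose that (1) every vertex of $D'$ reachable from $v$ has out-degree at least $(h+1)\cdot(d(2b-2)+1)+d$, and (2) the number of vertices of $D'$ at distance at most $(h+1)(2b-1)$ from $v$ is less than $d^h$. Then $D'$ contains a type-III gadget $G$ and a directed path $P_0$ from $v$ to $p(G)$ such that $V(P_0)\cap V(G)=\{p(G)\}$, $|V(G)|\le(2h+2)(2b-1)$ and $|V(P_0)|\le h(2b-1)$.
   Context: A gadget of type III (with parameter $b$) is a digraph consisting of designated vertices $p,q$, a vertex $r$, the arc $(p,q)$, and two internally vertex-disjoint directed paths $P_1,P_2$ from $p$ and from $q$ respectively to $r$, each of length at least $2b-1$; $p(G)$ denotes its vertex $p$. Distance from $v$ to $u$ means the length of a shortest directed $v$-$u$-path. *)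

theory Defs
  imports Main
begin

definition digraph :: "'a set \<Rightarrow> ('a \<times> 'a) set \<Rightarrow> bool" where
  "digraph V E \<longleftrightarrow> finite V \<and> E \<subseteq> V \<times> V \<and> (\<forall>x. (x, x) \<notin> E)"

definition dpath :: "'a set \<Rightarrow> ('a \<times> 'a) set \<Rightarrow> 'a list \<Rightarrow> bool" where
  "dpath V E P \<longleftrightarrow> P \<noteq> [] \<and> distinct P \<and> set P \<subseteq> V \<and>
     (\<forall>i. Suc i < length P \<longrightarrow> (P ! i, P ! Suc i) \<in> E)"

definition plen :: "'a list \<Rightarrow> nat" where
  "plen P = length P - 1"

definition out_degree :: "('a \<times> 'a) set \<Rightarrow> 'a \<Rightarrow> nat" where
  "out_degree E u = card {w. (u, w) \<in> E}"

definition reachable :: "'a set \<Rightarrow> ('a \<times> 'a) set \<Rightarrow> 'a \<Rightarrow> 'a \<Rightarrow> bool" where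
  "reachable V E v u \<longleftrightarrow> (\<exists>P. dpath V E P \<and> hd P = v \<and> last P = u)"

text \<open>Distance from v to u: length of a shortest directed v-u-path (only meaningful if
  u is reachable from v).\<close>
definition dist :: "'a set \<Rightarrow> ('a \<times> 'a) set \<Rightarrow> 'a \<Rightarrow> 'a \<Rightarrow> nat" where
  "dist V E v u = (LEAST n. \<exists>P. dpath V E P \<and> hd P = v \<and> last P = u \<and> plen P = n)"

definition ball_out :: "'a set \<Rightarrow> ('a \<times> 'a) set \<Rightarrow> 'a \<Rightarrow> nat \<Rightarrow> 'a set" where
  "ball_out V E v k = {u \<in> V. reachable V E v u \<and> dist V E v u \<le> k}"

text \<open>A type-III gadget with parameter b inside (V,E), given by the two paths
  P1 (from p) and P2 (from q) ending in the common vertex r; p = hd P1, q = hd P2,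
  and the arc (p,q) belongs to the gadget.\<close>
definition gadget_III :: "'a set \<Rightarrow> ('a \<times> 'a) set \<Rightarrow> nat \<Rightarrow> 'a list \<Rightarrow> 'a list \<Rightarrow> bool" where
  "gadget_III V E b P1 P2 \<longleftrightarrow>
     dpath V E P1 \<and> dpath V E P2 \<and> (hd P1, hd P2) \<in> E \<and>
     last P1 = last P2 \<and> set P1 \<inter> set P2 = {last P1} \<and>
     plen P1 \<ge> 2 * b - 1 \<and> plen P2 \<ge> 2 * b - 1"

definition gadget_vertices :: "'a list \<Rightarrow> 'a list \<Rightarrow> 'a set" where
  "gadget_vertices P1 P2 = set P1 \<union> set P2"

end

theory Submission
  imports Defs
begin

text \<open>Grow greedily, breadth-first, a tree of directed paths from v that branches d-fold at
  every depth divisible by k = 2b - 1 and is a bare path in between, down to depth h k.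
  Completed, it would have d^h leaves within distance h k of v, more than the ball holds; so
  the growth gets stuck at a shortest incomplete vertex z all of whose out-neighbours already
  lie in the tree.  Only few tree paths run along the path to z and leave it at a branching
  vertex without reaching the next branching depth -- fewer than the out-degree of z.  Hence
  some out-neighbour w of z lies on a branch that leaves the path to z at a branching vertex p
  and continues for k arcs, as the path to z does; these two branches from p, closed by the
  arc (z, w), form the gadget.\<close>

lemma dpath_take: "dpath V E P \<Longrightarrow> 0 < n \<Longrightarrow> dpath V E (take n P)"
  unfolding dpath_def by (auto dest: in_set_takeD)

lemma dpath_drop: "dpath V E P \<Longrightarrow> n < length P \<Longrightarrow> dpath V E (drop n P)"
  unfolding dpath_def by (auto dest: in_set_dropD)

lemma dpath_snoc:
  assumes "dpath V E P" "u \<in> V" "u \<notin> set P" "(last P, u) \<in> E"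
  shows "dpath V E (P @ [u])"
  using assms unfolding dpath_def
  by (auto simp: nth_append last_conv_nth less_Suc_eq dest: sym)

lemma dpath_arc: "dpath V E P \<Longrightarrow> Suc i < length P \<Longrightarrow> (P ! i, P ! Suc i) \<in> E"
  unfolding dpath_def by blast

lemma last_take_Suc: "i < length P \<Longrightarrow> last (take (Suc i) P) = P ! i"
  by (simp add: take_Suc_conv_app_nth)

lemma common_prefix_length:
  obtains c where "c \<le> length xs" "c \<le> length ys" "take c xs = take c ys"
    "c = length xs \<or> c = length ys \<or> xs ! c \<noteq> ys ! c"
proof -
  obtain ps xs' ys' where "xs = ps @ xs'" "ys = ps @ ys'" "xs' = [] \<or> ys' = [] \<or> hd xs' \<noteq> hd ys'"
    using longest_common_prefix by blast
  then show ?thesis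
    by (intro that[of "length ps"]) (auto simp: hd_conv_nth nth_append)
qed

lemma distinct_set_take_Int_drop_pred:
  assumes "distinct xs" "0 < c" "c \<le> length xs"
  shows "set (take c xs) \<inter> set (drop (c - 1) xs) = {xs ! (c - 1)}"
proof -
  have "take c xs = take (c - 1) xs @ [xs ! (c - 1)]"
    using take_Suc_conv_app_nth[of "c - 1" xs] assms(2,3) by simp
  moreover have "drop (c - 1) xs = xs ! (c - 1) # drop c xs"
    using Cons_nth_drop_Suc[of "c - 1" xs] assms(2,3) by simp
  moreover have "set (take (c - 1) xs) \<inter> set (drop (c - 1) xs) = {}"
    "set (take c xs) \<inter> set (drop c xs) = {}"
    using set_take_disj_set_drop_if_distinct[OF assms(1)] by auto
  ultimately show ?thesis by auto
qed

lemma div_ceiling_mult: "0 < m \<Longrightarrow> (n * m + m - 1) div m = (n :: nat)"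
proof -
  assume "0 < m"
  then have "n * m + m - 1 = n * m + (m - 1)" by arith
  also have "\<dots> div m = n + (m - 1) div m" by (rule div_mult_self3) (use \<open>0 < m\<close> in simp)
  also have "\<dots> = n" using \<open>0 < m\<close> by simp
  finally show ?thesis .
qed

lemma div_ceiling_Suc:
  "0 < m \<Longrightarrow> (Suc n + m - 1) div m = (n + m - 1) div m + (if m dvd (n :: nat) then 1 else 0)"
  using div_Suc[of "n + m - 1" m] by (simp add: dvd_eq_mod_eq_0)

lemma dpath_last_in_ball_out:
  assumes "dpath V E P" "hd P = v" "plen P \<le> r"
  shows "last P \<in> ball_out V E v r"
proof -
  have "reachable V E v (last P)" using assms(1,2) unfolding reachable_def by blast
  moreover have "dist V E v (last P) \<le> plen P"
    unfolding dist_def by (rule Least_le) (use assms(1,2) in blast)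
  moreover have "last P \<in> V" using assms(1) unfolding dpath_def by auto
  ultimately show ?thesis using assms(3) unfolding ball_out_def by simp
qed

text \<open>A tree in the digraph rooted at v, represented by the set of its root paths:
  the set is closed under nonempty prefixes, and distinct paths end in distinct vertices.\<close>
definition path_tree :: "'a set \<Rightarrow> ('a \<times> 'a) set \<Rightarrow> 'a \<Rightarrow> 'a list set \<Rightarrow> bool" where
  "path_tree V E v T \<longleftrightarrow> finite T \<and> [v] \<in> T \<and> inj_on last T \<and>
     (\<forall>P\<in>T. dpath V E P \<and> hd P = v \<and> (\<forall>n>0. take n P \<in> T))"

definition children :: "'a list set \<Rightarrow> 'a list \<Rightarrow> 'a set" where
  "children T P = {u. P @ [u] \<in> T}"

definition descendants_at :: "'a list set \<Rightarrow> 'a list \<Rightarrow> nat \<Rightarrow> 'a list set" where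
  "descendants_at T Y r = {P \<in> T. take (length Y) P = Y \<and> length P = length Y + r}"

definition descendants_within :: "'a list set \<Rightarrow> 'a list \<Rightarrow> nat \<Rightarrow> 'a list set" where
  "descendants_within T Y n = {P \<in> T. take (length Y) P = Y \<and> length P \<le> length Y + n}"

lemma children_insert_snoc [simp]:
  "children (insert (Q @ [u]) T) P = (if P = Q then insert u (children T P) else children T P)"
  unfolding children_def by auto

lemma descendants_within_eq_UN: "descendants_within T Y n = (\<Union>r\<le>n. descendants_at T Y r)"
proof (intro equalityI subsetI)
  fix P assume P: "P \<in> descendants_within T Y n"
  then have "take (length Y) P = Y" by (simp add: descendants_within_def)
  then have "length Y \<le> length P" using length_take[of "length Y" P] by simp
  then have "P \<in> descendants_at T Y (length P - length Y)" "length P - length Y \<le> n"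
    using P by (auto simp: descendants_within_def descendants_at_def)
  then show "P \<in> (\<Union>r\<le>n. descendants_at T Y r)" by blast
qed (auto simp: descendants_within_def descendants_at_def)

lemma descendants_withinI:
  assumes "P \<in> T" "take c P = take c Q" "l \<le> c" "l \<le> length Q" "length P \<le> l + n"
  shows "P \<in> descendants_within T (take l Q) n"
proof -
  have "take l P = take l Q" using arg_cong[OF assms(2), of "take l"] assms(3) by (simp add: min_def)
  then show ?thesis using assms(1,4,5) unfolding descendants_within_def by (simp add: min_def)
qed

definition rooted_gadget_III ::
  "'a set \<Rightarrow> ('a \<times> 'a) set \<Rightarrow> nat \<Rightarrow> 'a \<Rightarrow> 'a list \<Rightarrow> 'a list \<Rightarrow> 'a list \<Rightarrow> bool" where
  "rooted_gadget_III V E b v P0 P1 P2 \<longleftrightarrow> gadget_III V E b P1 P2 \<and>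
     dpath V E P0 \<and> hd P0 = v \<and> last P0 = hd P1 \<and> set P0 \<inter> gadget_vertices P1 P2 = {hd P1}"

context
  fixes V E v T
  assumes tree: "path_tree V E v T"
begin

lemma path_tree_finite: "finite T" and path_tree_root: "[v] \<in> T"
  and path_tree_inj_last: "inj_on last T"
  using tree unfolding path_tree_def by blast+

lemma path_treeD:
  assumes "P \<in> T"
  shows "dpath V E P" "hd P = v" "0 < n \<Longrightarrow> take n P \<in> T" "P \<noteq> []" "distinct P" "set P \<subseteq> V"
  using tree assms unfolding path_tree_def dpath_def by blast+

text \<open>A vertex of the tree determines the path leading to it.\<close>
lemma path_tree_nth_eq:
  assumes "P \<in> T" "P' \<in> T" "i < length P" "i' < length P'" "P ! i = P' ! i'"
  shows "take (Suc i) P = take (Suc i') P'" "i = i'"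
proof -
  have "take (Suc i) P \<in> T" "take (Suc i') P' \<in> T"
    using path_treeD(3) assms(1,2) by auto
  moreover have "last (take (Suc i) P) = last (take (Suc i') P')"
    using assms(3-5) by (simp add: last_take_Suc)
  ultimately show eq: "take (Suc i) P = take (Suc i') P'"
    using path_tree_inj_last by (meson inj_onD)
  from arg_cong[OF eq, of length] show "i = i'" using assms(3,4) by simp
qed

lemma path_tree_set_subset: "P \<in> T \<Longrightarrow> set P \<subseteq> last ` T"
proof
  fix x assume "P \<in> T" "x \<in> set P"
  then obtain i where i: "i < length P" "P ! i = x" by (auto simp: in_set_conv_nth)
  have "take (Suc i) P \<in> T" using path_treeD(3) \<open>P \<in> T\<close> by simp
  then show "x \<in> last ` T" using i by (metis image_eqI last_take_Suc)
qed

lemma path_tree_card_le: "finite V \<Longrightarrow> card T \<le> card V"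
proof -
  assume "finite V"
  have "last ` T \<subseteq> V" using path_treeD(4,6) by (fastforce intro: last_in_set)
  then have "card (last ` T) \<le> card V" using \<open>finite V\<close> by (rule card_mono[rotated])
  then show ?thesis using path_tree_inj_last by (simp add: card_image)
qed

lemma children_finite: "finite (children T P)"
proof -
  have "children T P \<subseteq> last ` T" unfolding children_def by force
  then show ?thesis using path_tree_finite by (meson finite_imageI finite_subset)
qed

lemma children_snoc_new: "Q @ [u] \<notin> T \<Longrightarrow> children T (Q @ [u]) = {}"
  unfolding children_def using path_treeD(3)[of _ "Suc (length Q)"] by fastforce

lemma descendants_at_0: "Y \<in> T \<Longrightarrow> descendants_at T Y 0 = {Y}"
  unfolding descendants_at_def by (auto simp: take_all)

lemma finite_descendants_at: "finite (descendants_at T Y r)"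
  using path_tree_finite unfolding descendants_at_def by simp

lemma card_descendants_at_Suc:
  assumes "Y \<in> T"
  shows "card (descendants_at T Y (Suc r)) = (\<Sum>P\<in>descendants_at T Y r. card (children T P))"
proof -
  have "descendants_at T Y (Suc r) = (\<Union>P\<in>descendants_at T Y r. (\<lambda>u. P @ [u]) ` children T P)"
  proof (intro equalityI subsetI)
    fix P' assume P': "P' \<in> descendants_at T Y (Suc r)"
    then have "P' \<noteq> []" by (auto simp: descendants_at_def)
    then have snoc: "P' = butlast P' @ [last P']" by simp
    have "length Y > 0" using path_treeD(4)[OF assms] by simp
    then have "butlast P' \<in> T" using P' path_treeD(3)[of P' "length P' - 1"]
      by (auto simp: descendants_at_def butlast_conv_take)
    then have "butlast P' \<in> descendants_at T Y r" using P'
      by (auto simp: descendants_at_def butlast_conv_take min_def)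
    moreover have "last P' \<in> children T (butlast P')"
      using P' snoc by (auto simp: descendants_at_def children_def)
    ultimately show "P' \<in> (\<Union>P\<in>descendants_at T Y r. (\<lambda>u. P @ [u]) ` children T P)"
      using snoc by blast
  qed (auto simp: descendants_at_def children_def)
  also have "card \<dots> = (\<Sum>P\<in>descendants_at T Y r. card ((\<lambda>u. P @ [u]) ` children T P))"
    by (rule card_UN_disjoint) (auto simp: finite_descendants_at children_finite)
  also have "\<dots> = (\<Sum>P\<in>descendants_at T Y r. card (children T P))"
    by (intro sum.cong refl card_image) (auto simp: inj_on_def)
  finally show ?thesis .
qed

lemma path_tree_prefix_if_last_in_set:
  assumes "P \<in> T" "Q \<in> T" "last P \<in> set Q"
  shows "take (length P) Q = P"
proof -
  obtain j where j: "j < length Q" "Q ! j = last P" using assms(3) by (auto simp: in_set_conv_nth)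
  have "P \<noteq> []" using path_treeD(4)[OF assms(1)] .
  then have "last P = P ! (length P - 1)" by (simp add: last_conv_nth)
  then have "take (Suc (length P - 1)) P = take (Suc j) Q" "length P - 1 = j"
    using path_tree_nth_eq[OF assms(1,2), of "length P - 1" j] j \<open>P \<noteq> []\<close> by auto
  then show ?thesis using \<open>P \<noteq> []\<close> j(1) by simp
qed

lemma path_tree_drop_disjoint:
  assumes P: "P \<in> T" and Q: "Q \<in> T" and "c < length P" "c < length Q" "P ! c \<noteq> Q ! c"
  shows "set (drop c P) \<inter> set (drop c Q) = {}"
proof (rule ccontr)
  assume "set (drop c P) \<inter> set (drop c Q) \<noteq> {}"
  then obtain i j where "i < length P - c" "j < length Q - c" and eq: "Q ! (c + j) = P ! (c + i)"
    by (auto simp: in_set_conv_nth)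
  then have i: "c + i < length P" and j: "c + j < length Q" by auto
  have "i = j" and prefix: "take (Suc (c + i)) P = take (Suc (c + j)) Q"
    using path_tree_nth_eq[OF P Q i j eq[symmetric]] by auto
  have "P ! c = take (Suc (c + i)) P ! c" by simp
  also have "\<dots> = Q ! c" unfolding prefix by simp
  finally show False using assms(5) by simp
qed

lemma path_tree_insert:
  assumes "Q \<in> T" "(last Q, u) \<in> E" "u \<in> V" "u \<notin> last ` T"
  shows "path_tree V E v (insert (Q @ [u]) T)"
proof -
  have "u \<notin> set Q" using path_tree_set_subset[OF assms(1)] assms(4) by blast
  then have "dpath V E (Q @ [u])" by (rule dpath_snoc[OF path_treeD(1)[OF assms(1)] assms(3) _ assms(2)])
  moreover have "hd (Q @ [u]) = v" using path_treeD(2,4)[OF assms(1)] by simp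
  moreover have "\<forall>n>0. take n (Q @ [u]) \<in> insert (Q @ [u]) T"
  proof (intro allI impI)
    fix n :: nat assume "n > 0"
    then show "take n (Q @ [u]) \<in> insert (Q @ [u]) T"
      using path_treeD(3)[OF assms(1)] by (cases "n \<le> length Q") auto
  qed
  moreover have "\<forall>P\<in>T. dpath V E P \<and> hd P = v \<and> (\<forall>n>0. take n P \<in> insert (Q @ [u]) T)"
    using path_treeD(1-3) by simp
  moreover have "inj_on last (insert (Q @ [u]) T)"
    using path_tree_inj_last assms(4) by (auto simp: inj_on_insert)
  ultimately show ?thesis
    using path_tree_finite path_tree_root unfolding path_tree_def by blast
qed

text \<open>Here p is the last common vertex of Pw and Q, q its successor on Q, and r the end of Pw.\<close>
lemma branch_gadget:
  assumes Pw: "Pw \<in> T" and Q: "Q \<in> T" and "0 < c" "1 \<le> b"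
    and long: "c + (2*b - 1) \<le> length Pw" "c + (2*b - 1) \<le> length Q"
    and common: "take c Pw = take c Q" and branch: "Pw ! c \<noteq> Q ! c"
    and arc: "(last Q, last Pw) \<in> E"
  shows "rooted_gadget_III V E b v (take c Q) (drop (c - 1) Pw) (drop c Q @ [last Pw])"
proof -
  define w where "w = last Pw"
  define P0 where "P0 = take c Q"
  define P1 where "P1 = drop (c - 1) Pw"
  define P2 where "P2 = drop c Q @ [w]"
  have lPw: "c < length Pw" and lQ: "c < length Q" using long \<open>1 \<le> b\<close> by auto
  have "take c Pw ! (c - 1) = take c Q ! (c - 1)" using common by simp
  then have p: "Pw ! (c - 1) = Q ! (c - 1)" using \<open>0 < c\<close> by simp
  have hdP1: "hd P1 = Q ! (c - 1)" unfolding P1_def using p lPw by (simp add: hd_drop_conv_nth)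
  have lastP1: "last P1 = w" unfolding P1_def w_def using lPw by simp
  have w_notin_Q: "w \<notin> set Q"
  proof
    assume "w \<in> set Q"
    then have prefix: "take (length Pw) Q = Pw"
      using path_tree_prefix_if_last_in_set[OF Pw Q] unfolding w_def by blast
    have "Pw ! c = take (length Pw) Q ! c" by (simp only: prefix)
    also have "\<dots> = Q ! c" using lPw by simp
    finally show False using branch by simp
  qed
  have "Q ! (c - 1) \<in> set (take c Q)" using nth_mem[of "c - 1" "take c Q"] lQ \<open>0 < c\<close> by simp
  then have "Q ! (c - 1) \<notin> set (drop c Q)"
    using set_take_disj_set_drop_if_distinct[OF path_treeD(5)[OF Q], of c c] by blast
  moreover have "P1 = Q ! (c - 1) # drop c Pw"
    using Cons_nth_drop_Suc[of "c - 1" Pw] lPw p \<open>0 < c\<close> unfolding P1_def by simp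
  ultimately have P1_P2: "set P1 \<inter> set (drop c Q) = {}"
    using path_tree_drop_disjoint[OF Pw Q lPw lQ branch] by auto
  have P0_P1: "set P0 \<inter> set P1 = {hd P1}"
    using distinct_set_take_Int_drop_pred[OF path_treeD(5)[OF Pw] \<open>0 < c\<close>] lPw common hdP1 p
    unfolding P0_def P1_def by simp
  have P0_P2: "set P0 \<inter> set P2 = {}"
    unfolding P0_def P2_def
    using set_take_disj_set_drop_if_distinct[OF path_treeD(5)[OF Q], of c c] w_notin_Q
    by (auto dest: in_set_takeD)
  have "gadget_III V E b P1 P2"
    unfolding gadget_III_def
  proof (intro conjI)
    show "dpath V E P1" unfolding P1_def using dpath_drop[OF path_treeD(1)[OF Pw]] lPw by simp
    have "w \<in> V" using path_treeD(4,6)[OF Pw] unfolding w_def by auto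
    moreover have "w \<notin> set (drop c Q)" using w_notin_Q by (auto dest: in_set_dropD)
    moreover have "(last (drop c Q), w) \<in> E" using arc lQ unfolding w_def by simp
    ultimately show "dpath V E P2"
      unfolding P2_def by (rule dpath_snoc[OF dpath_drop[OF path_treeD(1)[OF Q] lQ]])
    have "(Q ! (c - 1), Q ! Suc (c - 1)) \<in> E"
      using dpath_arc[OF path_treeD(1)[OF Q], of "c - 1"] lQ \<open>0 < c\<close> by simp
    then show "(hd P1, hd P2) \<in> E" using hdP1 lQ \<open>0 < c\<close> unfolding P2_def by (simp add: hd_drop_conv_nth)
    show "last P1 = last P2" using lastP1 unfolding P2_def by simp
    have "w \<in> set P1" using last_in_set[of P1] lastP1 lPw unfolding P1_def by force
    then show "set P1 \<inter> set P2 = {last P1}" using lastP1 P1_P2 unfolding P2_def by auto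
    show "plen P1 \<ge> 2 * b - 1" "plen P2 \<ge> 2 * b - 1"
      unfolding plen_def P1_def P2_def using long \<open>0 < c\<close> by auto
  qed
  moreover have "dpath V E P0" "hd P0 = v"
    unfolding P0_def using path_treeD(1,2)[OF Q] \<open>0 < c\<close> by (auto intro: dpath_take)
  moreover have "last P0 = hd P1"
    using last_take_Suc[of "c - 1" Q] lQ \<open>0 < c\<close> hdP1 unfolding P0_def by simp
  ultimately have "rooted_gadget_III V E b v P0 P1 P2"
    using P0_P1 P0_P2 unfolding rooted_gadget_III_def gadget_vertices_def by (simp add: Int_Un_distrib)
  then show ?thesis unfolding P0_def P1_def P2_def w_def .
qed

end

locale gadget_search =
  fixes V :: "'a set" and E :: "('a \<times> 'a) set" and v :: 'a and b h d k :: nat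
  assumes b_pos: "b \<ge> 1" and digraph: "digraph V E" and root: "v \<in> V"
    and k_def: "k = 2 * b - 1"
    and out_degree_large: "\<forall>u \<in> V. reachable V E v u \<longrightarrow>
           out_degree E u \<ge> (h + 1) * (d * (k - 1) + 1) + d"
    and ball_small: "card (ball_out V E v ((h + 1) * k)) < d ^ h"
begin

lemma k_pos: "k \<ge> 1"
  using b_pos k_def by simp

definition small_gadget :: bool where
  "small_gadget \<longleftrightarrow> (\<exists>P0 P1 P2. rooted_gadget_III V E b v P0 P1 P2 \<and>
     card (gadget_vertices P1 P2) \<le> (2 * h + 2) * k \<and> card (set P0) \<le> h * k)"

text \<open>The depth of P is length P - 1: the tree is to branch d-fold exactly at the depths
  divisible by k, down to depth h k.\<close>
definition capacity :: "'a list \<Rightarrow> nat" where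
  "capacity P = (if k dvd (length P - 1) then d else 1)"

definition incomplete :: "'a list set \<Rightarrow> 'a list \<Rightarrow> bool" where
  "incomplete T P \<longleftrightarrow> length P \<le> h * k \<and> card (children T P) < capacity P"

text \<open>The last clause makes the tree grow breadth-first from one branching depth to the next.\<close>
definition admissible :: "'a list set \<Rightarrow> bool" where
  "admissible T \<longleftrightarrow> path_tree V E v T \<and>
     (\<forall>P\<in>T. length P \<le> h * k + 1 \<and> card (children T P) \<le> capacity P) \<and>
     (\<forall>P\<in>T. k dvd (length P - 1) \<and> children T P \<noteq> {} \<longrightarrow>
        (\<forall>Q\<in>T. length Q < length P \<longrightarrow> \<not> incomplete T Q))"

lemma admissibleD:
  assumes "admissible T"
  shows "path_tree V E v T" "P \<in> T \<Longrightarrow> length P \<le> h * k + 1"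
    "P \<in> T \<Longrightarrow> card (children T P) \<le> capacity P"
  using assms unfolding admissible_def by blast+

lemma admissible_branching_le_incomplete:
  assumes "admissible T" "P \<in> T" "k dvd (length P - 1)" "children T P \<noteq> {}"
    and "Q \<in> T" "incomplete T Q"
  shows "length P \<le> length Q"
  using assms unfolding admissible_def by (meson not_le)

lemma admissible_root: "admissible {[v]}"
proof -
  have "children {[v]} [v] = {}" unfolding children_def by auto
  moreover have "take n [v] = [v]" if "n > 0" for n using that by (cases n) auto
  moreover have "dpath V E [v]" unfolding dpath_def using root by simp
  ultimately show ?thesis unfolding admissible_def path_tree_def by auto
qed

lemma card_descendants_at_le:
  assumes adm: "admissible T" and Y: "Y \<in> T" and branching: "k dvd (length Y - 1)"
  shows "1 \<le> r \<Longrightarrow> r \<le> k \<Longrightarrow> card (descendants_at T Y r) \<le> d"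
proof (induction r rule: nat_induct_at_least)
  case base
  have "card (descendants_at T Y 1) = card (children T Y)"
    using card_descendants_at_Suc[OF admissibleD(1)[OF adm] Y, of 0]
      descendants_at_0[OF admissibleD(1)[OF adm] Y] by simp
  also have "\<dots> \<le> d" using admissibleD(3)[OF adm Y] branching by (simp add: capacity_def)
  finally show ?case .
next
  case (Suc r)
  have "length Y > 0" using path_treeD(4)[OF admissibleD(1)[OF adm] Y] by simp
  have "card (children T P) \<le> 1" if "P \<in> descendants_at T Y r" for P
  proof -
    have P: "P \<in> T" "length P = length Y + r" using that by (auto simp: descendants_at_def)
    then have "length P - 1 = (length Y - 1) + r" using \<open>length Y > 0\<close> by linarith
    moreover have "\<not> k dvd r" using Suc.hyps Suc.prems by (auto dest: dvd_imp_le)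
    ultimately have "\<not> k dvd (length P - 1)" using branching by (simp add: dvd_add_right_iff)
    then show ?thesis using admissibleD(3)[OF adm P(1)] by (simp add: capacity_def)
  qed
  then have "(\<Sum>P\<in>descendants_at T Y r. card (children T P)) \<le> (\<Sum>P\<in>descendants_at T Y r. 1)"
    by (rule sum_mono)
  then show ?case
    using card_descendants_at_Suc[OF admissibleD(1)[OF adm] Y, of r] Suc by simp
qed

lemma card_descendants_within_le:
  assumes adm: "admissible T" and Y: "Y \<in> T" and branching: "k dvd (length Y - 1)"
    and "n \<le> k"
  shows "card (descendants_within T Y n) \<le> 1 + n * d"
proof -
  have "card (descendants_within T Y n) \<le> (\<Sum>r\<le>n. card (descendants_at T Y r))"
    unfolding descendants_within_eq_UN by (rule card_UN_le) simp
  also have "\<dots> = card (descendants_at T Y 0) + (\<Sum>r<n. card (descendants_at T Y (Suc r)))"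
    by (simp add: sum.atMost_shift)
  also have "\<dots> \<le> 1 + (\<Sum>r<n. d)"
    using descendants_at_0[OF admissibleD(1)[OF adm] Y] card_descendants_at_le[OF assms(1-3)] \<open>n \<le> k\<close>
    by (intro add_mono sum_mono) auto
  finally show ?thesis by simp
qed

lemma card_descendants_at_root_ge:
  assumes adm: "admissible T" and complete: "\<forall>P\<in>T. \<not> incomplete T P"
  shows "n \<le> h * k \<Longrightarrow> d ^ ((n + k - 1) div k) \<le> card (descendants_at T [v] n)"
proof (induction n)
  case 0
  have "[v] \<in> T" using path_tree_root[OF admissibleD(1)[OF adm]] .
  then show ?case using descendants_at_0[OF admissibleD(1)[OF adm]] k_pos by simp
next
  case (Suc n)
  let ?L = "descendants_at T [v]" and ?cap = "if k dvd n then d else 1"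
  have "(\<Sum>P\<in>?L n. ?cap) = (\<Sum>P\<in>?L n. capacity P)"
    by (rule sum.cong) (auto simp: capacity_def descendants_at_def)
  also have "\<dots> \<le> (\<Sum>P\<in>?L n. card (children T P))"
  proof (rule sum_mono)
    fix P assume "P \<in> ?L n"
    then have "P \<in> T" "length P \<le> h * k" using Suc.prems by (auto simp: descendants_at_def)
    then show "capacity P \<le> card (children T P)" using complete by (auto simp: incomplete_def)
  qed
  also have "\<dots> = card (?L (Suc n))"
    using card_descendants_at_Suc[OF admissibleD(1)[OF adm] path_tree_root[OF admissibleD(1)[OF adm]]]
    by simp
  finally have step: "card (?L n) * ?cap \<le> card (?L (Suc n))" by simp
  have "d ^ ((Suc n + k - 1) div k) = d ^ ((n + k - 1) div k) * ?cap"
    using div_ceiling_Suc[of k n] k_pos by simp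
  also have "\<dots> \<le> card (?L n) * ?cap" using Suc by simp
  finally show ?case using step by linarith
qed

lemma admissible_incomplete_exists:
  assumes adm: "admissible T"
  shows "\<exists>P\<in>T. incomplete T P"
proof (rule ccontr)
  assume "\<not> ?thesis"
  then have complete: "\<forall>P\<in>T. \<not> incomplete T P" by blast
  have tree: "path_tree V E v T" using admissibleD(1)[OF adm] .
  let ?L = "descendants_at T [v] (h * k)"
  have "(h * k + k - 1) div k = h" using div_ceiling_mult[of k h] k_pos by simp
  then have "d ^ h \<le> card ?L" using card_descendants_at_root_ge[OF adm complete, of "h * k"] by simp
  also have "\<dots> = card (last ` ?L)"
    using inj_on_subset[OF path_tree_inj_last[OF tree]] by (auto simp: card_image descendants_at_def)
  also have "\<dots> \<le> card (ball_out V E v ((h + 1) * k))"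
  proof (rule card_mono)
    show "finite (ball_out V E v ((h + 1) * k))"
      using digraph unfolding digraph_def ball_out_def by simp
    show "last ` ?L \<subseteq> ball_out V E v ((h + 1) * k)"
    proof
      fix u assume "u \<in> last ` ?L"
      then obtain P where "P \<in> T" "length P = h * k + 1" "u = last P"
        by (auto simp: descendants_at_def)
      then show "u \<in> ball_out V E v ((h + 1) * k)"
        using dpath_last_in_ball_out[OF path_treeD(1,2)[OF tree], of P "(h + 1) * k"]
        by (simp add: plen_def)
    qed
  qed
  finally show False using ball_small by simp
qed

lemma admissible_branch_depth:
  assumes adm: "admissible T" and P: "P \<in> T" and P': "P' \<in> T" and "0 < c"
    and "c < length P" "c < length P'" "take c P = take c P'" "P ! c \<noteq> P' ! c"
  shows "k dvd (c - 1)"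
proof -
  have tree: "path_tree V E v T" using admissibleD(1)[OF adm] .
  have "take (Suc c) P = take c P @ [P ! c]" "take (Suc c) P' = take c P @ [P' ! c]"
    using assms(5-7) by (auto simp: take_Suc_conv_app_nth)
  then have "{P ! c, P' ! c} \<subseteq> children T (take c P)"
    using path_treeD(3)[OF tree P, of "Suc c"] path_treeD(3)[OF tree P', of "Suc c"]
    unfolding children_def by auto
  then have "card {P ! c, P' ! c} \<le> card (children T (take c P))"
    by (rule card_mono[OF children_finite[OF tree]])
  then have "2 \<le> card (children T (take c P))" using assms(8) by simp
  also have "\<dots> \<le> capacity (take c P)"
    using admissibleD(3)[OF adm] path_treeD(3)[OF tree P \<open>0 < c\<close>] by blast
  finally show ?thesis using assms(5) by (auto simp: capacity_def split: if_splits)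
qed

lemma admissible_length_le:
  assumes adm: "admissible T" and Q: "Q \<in> T" "incomplete T Q" and P: "P \<in> T"
  shows "length P \<le> (length Q - 1) div k * k + k + 1"
proof (rule ccontr)
  let ?n = "(length Q - 1) div k * k + k + 1"
  have tree: "path_tree V E v T" using admissibleD(1)[OF adm] .
  assume "\<not> ?thesis"
  then have "?n < length P" by simp
  then have "take (Suc ?n) P = take ?n P @ [P ! ?n]" by (simp add: take_Suc_conv_app_nth)
  then have "children T (take ?n P) \<noteq> {}"
    using path_treeD(3)[OF tree P, of "Suc ?n"] unfolding children_def by auto
  moreover have "take ?n P \<in> T" using path_treeD(3)[OF tree P] by simp
  moreover have "length (take ?n P) = ?n" using \<open>?n < length P\<close> by simp
  ultimately have "?n \<le> length Q"
    using admissible_branching_le_incomplete[OF adm \<open>take ?n P \<in> T\<close> _ _ Q] by simp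
  moreover have "length Q - 1 < k + (length Q - 1) div k * k"
    using dividend_less_div_times k_pos by simp
  ultimately show False by linarith
qed

lemma small_gadget_of_branch:
  assumes adm: "admissible T" and Pw: "Pw \<in> T" and Q: "Q \<in> T" and "0 < c"
    and long: "c + k \<le> length Pw" "c + k \<le> length Q"
    and "take c Pw = take c Q" "Pw ! c \<noteq> Q ! c" "(last Q, last Pw) \<in> E"
  shows small_gadget
proof -
  let ?P0 = "take c Q" and ?P1 = "drop (c - 1) Pw" and ?P2 = "drop c Q @ [last Pw]"
  have "rooted_gadget_III V E b v ?P0 ?P1 ?P2"
    by (rule branch_gadget[OF admissibleD(1)[OF adm] Pw Q \<open>0 < c\<close> b_pos long[unfolded k_def] assms(7-9)])
  moreover have "card (gadget_vertices ?P1 ?P2) \<le> (2 * h + 2) * k"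
  proof -
    have "card (gadget_vertices ?P1 ?P2) \<le> length ?P1 + length ?P2"
      unfolding gadget_vertices_def
      using card_Un_le[of "set ?P1" "set ?P2"] card_length[of ?P1] card_length[of ?P2] by linarith
    also have "\<dots> \<le> 2 * (h * k + 1)"
      using admissibleD(2)[OF adm Pw] admissibleD(2)[OF adm Q] \<open>0 < c\<close> by simp
    finally show ?thesis using k_pos by (simp add: algebra_simps)
  qed
  moreover have "card (set ?P0) \<le> h * k"
    using card_length[of ?P0] admissibleD(2)[OF adm Q] long(2) k_pos by simp
  ultimately show ?thesis unfolding small_gadget_def by blast
qed

text \<open>The tree paths that follow Q up to one of its branching ancestors and end before the
  next branching depth; the deepest ancestor may be left for a full k arcs.\<close>
definition near_paths :: "'a list set \<Rightarrow> 'a list \<Rightarrow> 'a list set" where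
  "near_paths T Q = (let m = (length Q - 1) div k in
     descendants_within T (take (m * k + 1) Q) k \<union>
     (\<Union>j<m. descendants_within T (take (j * k + 1) Q) (k - 1)))"

lemma near_paths_subset: "near_paths T Q \<subseteq> T"
  unfolding near_paths_def descendants_within_def Let_def by auto

lemma card_near_paths_le:
  assumes adm: "admissible T" and Q: "Q \<in> T"
  shows "card (near_paths T Q) \<le> ((length Q - 1) div k + 1) * (1 + (k - 1) * d) + d"
proof -
  have tree: "path_tree V E v T" using admissibleD(1)[OF adm] .
  define m where "m = (length Q - 1) div k"
  define A where "A = 1 + (k - 1) * d"
  have "m * k \<le> length Q - 1" "length Q > 0"
    unfolding m_def using path_treeD(4)[OF tree Q] by simp_all
  have ancestor: "take (j * k + 1) Q \<in> T" "k dvd (length (take (j * k + 1) Q) - 1)" if "j \<le> m" for j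
  proof -
    have "j * k \<le> m * k" using that by simp
    then have "j * k + 1 \<le> length Q" using \<open>m * k \<le> length Q - 1\<close> \<open>length Q > 0\<close> by linarith
    then show "take (j * k + 1) Q \<in> T" "k dvd (length (take (j * k + 1) Q) - 1)"
      using path_treeD(3)[OF tree Q] by auto
  qed
  have "card (near_paths T Q) \<le> (1 + k * d) + (\<Sum>j<m. A)"
    unfolding near_paths_def Let_def m_def[symmetric]
  proof (rule order.trans[OF card_Un_le add_mono])
    show "card (descendants_within T (take (m * k + 1) Q) k) \<le> 1 + k * d"
      using card_descendants_within_le[OF adm ancestor] by simp
    have "card (\<Union>j<m. descendants_within T (take (j * k + 1) Q) (k - 1))
        \<le> (\<Sum>j<m. card (descendants_within T (take (j * k + 1) Q) (k - 1)))"
      by (rule card_UN_le) simp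
    also have "\<dots> \<le> (\<Sum>j<m. A)"
      using card_descendants_within_le[OF adm ancestor, of _ "k - 1"] unfolding A_def
      by (intro sum_mono) simp
    finally show "card (\<Union>j<m. descendants_within T (take (j * k + 1) Q) (k - 1)) \<le> (\<Sum>j<m. A)" .
  qed
  also have "\<dots> = (m + 1) * A + d" unfolding A_def using k_pos by (cases k) (simp_all add: algebra_simps)
  finally show ?thesis unfolding m_def A_def .
qed

lemma card_near_paths_less:
  assumes adm: "admissible T" and Q: "Q \<in> T" "incomplete T Q"
  shows "card (near_paths T Q) < out_degree E (last Q)"
proof -
  have tree: "path_tree V E v T" using admissibleD(1)[OF adm] .
  define A where "A = 1 + (k - 1) * d"
  have "(length Q - 1) div k * k \<le> length Q - 1" "length Q > 0"
    using path_treeD(4)[OF tree Q(1)] by simp_all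
  then have "(length Q - 1) div k * k < h * k" using Q(2) unfolding incomplete_def by linarith
  then have "(length Q - 1) div k + 1 < h + 1" by simp
  moreover have "0 < A" unfolding A_def by simp
  ultimately have "card (near_paths T Q) < (h + 1) * A + d"
    using card_near_paths_le[OF adm Q(1)] unfolding A_def[symmetric]
    by (meson add_less_mono1 mult_less_mono1 order.strict_trans1)
  also have "\<dots> \<le> out_degree E (last Q)"
  proof -
    have "last Q \<in> V" "reachable V E v (last Q)"
      using path_treeD(1,2,4,6)[OF tree Q(1)] unfolding reachable_def by auto
    then show ?thesis using out_degree_large unfolding A_def by (simp add: mult.commute)
  qed
  finally show ?thesis .
qed

text \<open>Otherwise the branch of Pw and the path to the end of Q form a gadget.\<close>
lemma early_branch_length_le:
  assumes adm: "admissible T" and Pw: "Pw \<in> T" and Q: "Q \<in> T"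
    and arc: "(last Q, last Pw) \<in> E" and no_gadget: "\<not> small_gadget"
    and "0 < c" "c \<le> length Pw" "take c Pw = take c Q" "c = length Pw \<or> Pw ! c \<noteq> Q ! c"
    and deep: "(c - 1) div k * k + k + 1 \<le> length Q"
  shows "length Pw \<le> (c - 1) div k * k + k"
proof (cases "c = length Pw")
  case True
  then show ?thesis using dividend_less_div_times[of k "c - 1"] k_pos \<open>0 < c\<close> by linarith
next
  case False
  moreover have "c < length Q"
    using dividend_less_div_times[of k "c - 1"] k_pos \<open>0 < c\<close> deep by linarith
  ultimately have branch: "c < length Pw" "c < length Q" "Pw ! c \<noteq> Q ! c"
    using assms(7,9) by auto
  then have "k dvd (c - 1)" using admissible_branch_depth[OF adm Pw Q \<open>0 < c\<close>] assms(8) by blast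
  then have "(c - 1) div k * k = c - 1" by simp
  show ?thesis
  proof (rule ccontr)
    assume "\<not> ?thesis"
    then have "c + k \<le> length Pw" "c + k \<le> length Q"
      using \<open>(c - 1) div k * k = c - 1\<close> \<open>0 < c\<close> deep by auto
    then show False
      using small_gadget_of_branch[OF adm Pw Q \<open>0 < c\<close> _ _ assms(8) branch(3) arc] no_gadget by blast
  qed
qed

lemma out_neighbour_in_near_paths:
  assumes adm: "admissible T" and Q: "Q \<in> T" "incomplete T Q" and Pw: "Pw \<in> T"
    and arc: "(last Q, last Pw) \<in> E" and no_gadget: "\<not> small_gadget"
  shows "Pw \<in> near_paths T Q"
proof -
  have tree: "path_tree V E v T" using admissibleD(1)[OF adm] .
  define m where "m = (length Q - 1) div k"
  have "Q \<noteq> []" "Pw \<noteq> []" using path_treeD(4)[OF tree] Q(1) Pw by auto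
  then have lenQ: "m * k + 1 \<le> length Q" unfolding m_def
    using div_times_less_eq_dividend[of "length Q - 1" k] by (cases Q) auto
  obtain c where c: "c \<le> length Pw" "c \<le> length Q" "take c Pw = take c Q"
    "c = length Pw \<or> c = length Q \<or> Pw ! c \<noteq> Q ! c"
    by (rule common_prefix_length)
  have "Pw ! 0 = hd Pw" "Q ! 0 = hd Q" using \<open>Q \<noteq> []\<close> \<open>Pw \<noteq> []\<close> by (simp_all add: hd_conv_nth)
  then have "Pw ! 0 = Q ! 0" using path_treeD(2)[OF tree Q(1)] path_treeD(2)[OF tree Pw] by simp
  then have "0 < c" using c(4) \<open>Q \<noteq> []\<close> \<open>Pw \<noteq> []\<close> by (cases c) auto
  show ?thesis
  proof (cases "m * k + 1 \<le> c")
    case True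
    have "length Pw \<le> m * k + 1 + k" using admissible_length_le[OF adm Q Pw] unfolding m_def by simp
    then show ?thesis
      using descendants_withinI[OF Pw c(3) True lenQ] unfolding near_paths_def m_def[symmetric] by simp
  next
    case False
    define j where "j = (c - 1) div k"
    have "j * k < m * k" using False \<open>0 < c\<close> div_times_less_eq_dividend[of "c - 1" k]
      unfolding j_def by linarith
    then have "j < m" by simp
    then have "j * k + k + 1 \<le> length Q" using lenQ mult_le_mono1[of "Suc j" m k] by simp
    then have "length Pw \<le> j * k + 1 + (k - 1)"
      using early_branch_length_le[OF adm Pw Q(1) arc no_gadget \<open>0 < c\<close> c(1,3)] c(4) False lenQ
      unfolding j_def by auto
    moreover have "j * k + 1 \<le> c" "j * k + 1 \<le> length Q"
      using div_times_less_eq_dividend[of "c - 1" k] \<open>0 < c\<close> c(2) unfolding j_def by linarith+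
    ultimately have "Pw \<in> descendants_within T (take (j * k + 1) Q) (k - 1)"
      using descendants_withinI[OF Pw c(3)] by blast
    then show ?thesis using \<open>j < m\<close> unfolding near_paths_def m_def[symmetric] by auto
  qed
qed

lemma small_gadget_if_saturated_end:
  assumes adm: "admissible T" and Q: "Q \<in> T" "incomplete T Q"
    and saturated: "\<forall>u. (last Q, u) \<in> E \<longrightarrow> u \<in> last ` T"
  shows small_gadget
proof (rule ccontr)
  assume "\<not> small_gadget"
  then have "{u. (last Q, u) \<in> E} \<subseteq> last ` near_paths T Q"
    using saturated out_neighbour_in_near_paths[OF adm Q] by blast
  moreover have "finite (near_paths T Q)"
    using near_paths_subset path_tree_finite[OF admissibleD(1)[OF adm]] by (rule finite_subset)
  ultimately have "out_degree E (last Q) \<le> card (near_paths T Q)"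
    unfolding out_degree_def by (meson card_image_le card_mono finite_imageI order.trans)
  then show False using card_near_paths_less[OF adm Q] by simp
qed

lemma incomplete_insert_snoc:
  assumes "admissible T" "Q @ [u] \<notin> T" "P \<noteq> Q"
  shows "incomplete (insert (Q @ [u]) T) P \<longleftrightarrow> incomplete T P"
  using assms children_snoc_new[OF admissibleD(1)[OF assms(1)] assms(2)]
  unfolding incomplete_def by simp

lemma admissible_insert:
  assumes adm: "admissible T" and Q: "Q \<in> T" "incomplete T Q"
    and shortest: "\<forall>Q'\<in>T. incomplete T Q' \<longrightarrow> length Q \<le> length Q'"
    and arc: "(last Q, u) \<in> E" and new: "u \<notin> last ` T"
  shows "admissible (insert (Q @ [u]) T)"
proof -
  define T' where "T' = insert (Q @ [u]) T"
  have tree: "path_tree V E v T" using admissibleD(1)[OF adm] .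
  have "u \<in> V" using arc digraph unfolding digraph_def by auto
  have "Q @ [u] \<notin> T" using new by force
  then have no_children: "children T' (Q @ [u]) = {}" and "u \<notin> children T Q"
    using children_snoc_new[OF tree] unfolding T'_def by (auto simp: children_def)
  have "path_tree V E v T'" unfolding T'_def by (rule path_tree_insert[OF tree Q(1) arc \<open>u \<in> V\<close> new])
  moreover have "length P \<le> h * k + 1 \<and> card (children T' P) \<le> capacity P" if "P \<in> T'" for P
  proof (cases "P = Q @ [u]")
    case True
    then show ?thesis using Q(2) no_children unfolding incomplete_def by simp
  next
    case False
    then have "P \<in> T" using that unfolding T'_def by simp
    moreover have "card (insert u (children T Q)) = Suc (card (children T Q))"
      using \<open>u \<notin> children T Q\<close> children_finite[OF tree] by simp
    ultimately show ?thesis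
      using admissibleD(2,3)[OF adm] Q(2) unfolding T'_def incomplete_def by auto
  qed
  moreover have "\<not> incomplete T' Q'"
    if P: "P \<in> T'" "k dvd (length P - 1)" "children T' P \<noteq> {}" and Q': "Q' \<in> T'" "length Q' < length P"
    for P Q'
  proof -
    have "P \<in> T" using P no_children unfolding T'_def by auto
    have "length P \<le> length Q"
      using P(3) admissible_branching_le_incomplete[OF adm \<open>P \<in> T\<close> P(2) _ Q] unfolding T'_def
      by (cases "P = Q") auto
    then have "Q' \<in> T" "Q' \<noteq> Q" using Q' unfolding T'_def by auto
    have "\<not> incomplete T Q'"
    proof (cases "P = Q")
      case True
      then show ?thesis using shortest \<open>Q' \<in> T\<close> Q'(2) by fastforce
    next
      case False
      then have "children T P \<noteq> {}" using P(3) unfolding T'_def by simp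
      then show ?thesis using adm \<open>P \<in> T\<close> P(2) \<open>Q' \<in> T\<close> Q'(2) unfolding admissible_def by blast
    qed
    then show ?thesis
      using incomplete_insert_snoc[OF adm \<open>Q @ [u] \<notin> T\<close> \<open>Q' \<noteq> Q\<close>] unfolding T'_def by simp
  qed
  ultimately show ?thesis unfolding admissible_def T'_def by blast
qed

theorem small_gadget_exists: small_gadget
proof -
  have "admissible T \<Longrightarrow> small_gadget" for T
  proof (induction "card V - card T" arbitrary: T rule: less_induct)
    case less
    obtain Q where Q: "Q \<in> T" "incomplete T Q"
      and shortest: "\<forall>Q'\<in>T. incomplete T Q' \<longrightarrow> length Q \<le> length Q'"
      using admissible_incomplete_exists[OF less.prems]
        ex_has_least_nat[of "\<lambda>Q. Q \<in> T \<and> incomplete T Q" _ length] by blast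
    show ?case
    proof (cases "\<forall>u. (last Q, u) \<in> E \<longrightarrow> u \<in> last ` T")
      case True
      then show ?thesis using small_gadget_if_saturated_end[OF less.prems Q] by blast
    next
      case False
      then obtain u where u: "(last Q, u) \<in> E" "u \<notin> last ` T" by blast
      let ?T' = "insert (Q @ [u]) T"
      have adm': "admissible ?T'" by (rule admissible_insert[OF less.prems Q shortest u])
      have "Q @ [u] \<notin> T" using u(2) by force
      then have "card ?T' = Suc (card T)"
        using path_tree_finite[OF admissibleD(1)[OF less.prems]] by simp
      moreover have "card ?T' \<le> card V"
        using path_tree_card_le[OF admissibleD(1)[OF adm']] digraph unfolding digraph_def by blast
      ultimately have "card V - card ?T' < card V - card T" by simp
      then show ?thesis using less.hyps adm' by blast
    qed
  qed
  then show ?thesis using admissible_root by blast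
qed

end

theorem lemma2p11:
  fixes V :: "'a set" and E :: "('a \<times> 'a) set" and v :: 'a and b h d :: nat
  assumes "b \<ge> 1" and "h \<ge> 1" and "d \<ge> 1"
    and "digraph V E" and "v \<in> V"
    and "\<forall>u \<in> V. reachable V E v u \<longrightarrow>
           out_degree E u \<ge> (h + 1) * (d * (2 * b - 2) + 1) + d"
    and "card (ball_out V E v ((h + 1) * (2 * b - 1))) < d ^ h"
  shows "\<exists>P1 P2 P0. gadget_III V E b P1 P2 \<and>
           dpath V E P0 \<and> hd P0 = v \<and> last P0 = hd P1 \<and>
           set P0 \<inter> gadget_vertices P1 P2 = {hd P1} \<and>
           card (gadget_vertices P1 P2) \<le> (2 * h + 2) * (2 * b - 1) \<and>
           card (set P0) \<le> h * (2 * b - 1)"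
proof -
  have "2 * b - 2 = (2 * b - 1) - 1" by simp
  then interpret gadget_search V E v b h d "2 * b - 1"
    using assms by unfold_locales simp_all
  show ?thesis
    using small_gadget_exists unfolding small_gadget_def rooted_gadget_III_def by blast
qed

end
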